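(* Let $(\alpha_0,\beta_0)\in\Delta_K$, $(\alpha_n,\beta_n)=T^n(\alpha_0,\beta_0)$, $\varepsilon_n=\varepsilon(\alpha_n,\beta_n)$. Let $\mathcal U=\sum_{i=0}^2(\bar{\bar e}_i,i^* )$ and $\mathcal U'=\sum_{i=0}^2(\bar{\bar 0},i^* )$, and for $n\ge0$ set $\gamma_n=\Theta_{\varepsilon_0}\cdots\Theta_{\varepsilon_{n-2}}\Theta_{\varepsilon_{n-1}}(\mathcal U)$ (with $\mathcal U$ viewed as a patch of $\mathscr S(\bar{\bar\nu}(\alpha_n,\beta_n))$) and $\gamma'_n=\Theta_{\varepsilon_0}\cdots\Theta_{\varepsilon_{n-1}}(\mathcal U')$ (with $\mathcal U'$ viewed as a patch of $\mathscr S'(\bar{\bar\nu}(\alpha_n,\beta_n))$). Then, identifying patches with their sets of unit squares: (1) $\gamma_n\setminus\gamma'_n=\mathcal U$ and $\gamma'_n\setminus\gamma_n=\mathcal U'$; (2) $\gamma_n\prec\gamma_{n+1}$ for all $n$; (3) $\bigcup_{n\ge0}\gamma_n\subset\mathscr S(\bar{\bar\nu}(\alpha_0,\beta_0))$.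
   Context: Let $K\subset\mathbb{R}$ be a real cubic number field, $N=N_{K/\mathbb{Q}}$ its norm. Fix $r=p/q$ with $p,q$ positive coprime integers and $3\nmid p$. Let $\Delta_K=\{(\alpha,\beta)\in K^2:\ 1,\alpha,\beta \text{ linearly independent over }\mathbb{Q},\ \alpha,\beta>0,\ \alpha+\beta<1\}$ and $Ind=\{(i,j): i,j\in\{0,1,2\},\ i\neq j\}$. Let $\Delta=\{(x,y)\in\mathbb{R}^2: x,y\ge 0,\ x+y\le 1\}$ and $\triangle(1,2)=\{(x,y)\in\Delta: x\ge y\}$, $\triangle(2,1)=\{x\le y\}$, $\triangle(0,1)=\{2x+y-1\le 0\}$, $\triangle(1,0)=\{2x+y-1\ge 0\}$, $\triangle(0,2)=\{x+2y-1\le0\}$, $\triangle(2,0)=\{x+2y-1\ge 0\}$ (all subsets of $\Delta$). Maps $T_{(i,j)}:\triangle(i,j)\to\Delta$: $T_{(1,2)}(x,y)=(\frac{x-y}{1-y},\frac{y}{1-y})$, $T_{(2,1)}(x,y)=(\frac{x}{1-x},\frac{y-x}{1-x})$, $T_{(0,1)}(x,y)=(\frac{x}{1-x},\frac{y}{1-x})$, $T_{(1,0)}(x,y)=(\frac{2x+y-1}{x+y},\frac{y}{x+y})$, $T_{(0,2)}(x,y)=(\frac{x}{1-y},\frac{y}{1-y})$, $T_{(2,0)}(x,y)=(\frac{x}{x+y},\frac{x+2y-1}{x+y})$. For $(\alpha,\beta)\in\Delta_K$ put $\gamma=1-\alpha-\beta$ and $v_{\{1,2\}}=\frac{\alpha^r\beta^r}{|N(\alpha)N(\beta)|}$,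 $v_{\{0,1\}}=\frac{\alpha^r\gamma^r}{|N(\alpha)N(\gamma)|}$, $v_{\{0,2\}}=\frac{\beta^r\gamma^r}{|N(\beta)N(\gamma)|}$; the maximum is attained at a unique pair $\{i_0,j_0\}$. $\varepsilon(\alpha,\beta)$ is the ordered pair $(i,j)\in Ind$ with $\{i,j\}=\{i_0,j_0\}$ and $(\alpha,\beta)\in\triangle(i,j)$, and $T(\alpha,\beta)=T_{\varepsilon(\alpha,\beta)}(\alpha,\beta)$ (a map $\Delta_K\to\Delta_K$). For $(i,j)\in Ind$, $M_{(i,j)}=(m_{k\ell})_{0\le k,\ell\le2}$ with $m_{k\ell}=1$ if $k=\ell$ or $(k,\ell)=(i,j)$, and $0$ otherwise; $L_{(i,j)}:=M_{(j,i)}$. For $(\alpha,\beta)\in\Delta_K$, $\bar{\bar\nu}(\alpha,\beta)={}^t(1-\alpha-\beta,\alpha,\beta)$. Let $\bar{\bar e}_0,\bar{\bar e}_1,\bar{\bar e}_2$ be the standard basis of $\mathbb{R}^3$. A unit square $(\bar{\bar x},i^* )$ ($\bar{\bar x}\in\mathbb{Z}^3$, $i\in\{0,1,2\}$) is the set $\{\bar{\bar x}+t\bar{\bar e}_j+u\bar{\bar e}_k: t,u\in[0,1]\}$ with $\{i,j,k\}=\{0,1,2\}$. For $\bar{\bar a}\in\mathbb{R}^3_{>0}$ with $\mathbb{Q}$-linearly independent coordinates, the stepped surfaces are $\mathscr S(\bar{\bar a})=\{(\bar{\bar x},i^* ): \bar{\bar x}\in\mathbb{Z}^3, i\in\{0,1,2\},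 \langle\bar{\bar x},\bar{\bar a}\rangle>0,\ \langle\bar{\bar x}-\bar{\bar e}_i,\bar{\bar a}\rangle\le0\}$ and $\mathscr S'(\bar{\bar a})=\{(\bar{\bar x},i^* ): \langle\bar{\bar x},\bar{\bar a}\rangle\ge0,\ \langle\bar{\bar x}-\bar{\bar e}_i,\bar{\bar a}\rangle<0\}$. A patch is a finite formal sum of distinct unit squares, identified with its set of squares; $\gamma\prec\delta$ means the set of squares of $\gamma$ is contained in that of $\delta$. For $(i,j)\in Ind$ the dual substitution $\Theta_{(i,j)}$ is defined on unit squares by $\Theta_{(i,j)}(\bar{\bar x},j^* )=(L_{(i,j)}^{-1}(\bar{\bar x}+\bar{\bar e}_i),i^* )+(L_{(i,j)}^{-1}\bar{\bar x},j^* )$ and $\Theta_{(i,j)}(\bar{\bar x},k^* )=(L_{(i,j)}^{-1}\bar{\bar x},k^* )$ for $k\neq j$, and extended additively to formal sums. *)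

theory Defs
  imports "HOL-Analysis.Analysis"
begin

definition is_Q_basis :: "real set \<Rightarrow> real^3 \<Rightarrow> bool" where
  "is_Q_basis K b \<longleftrightarrow>
     (\<forall>k. b $ k \<in> K) \<and>
     (\<forall>c::real^3. (\<forall>k. c $ k \<in> \<rat>) \<longrightarrow> c \<bullet> b = 0 \<longrightarrow> c = 0) \<and>
     K = {c \<bullet> b | c::real^3. \<forall>k. c $ k \<in> \<rat>}"

definition real_cubic_field :: "real set \<Rightarrow> bool" where
  "real_cubic_field K \<longleftrightarrow>
     0 \<in> K \<and> 1 \<in> K \<and>
     (\<forall>x\<in>K. \<forall>y\<in>K. x + y \<in> K \<and> x - y \<in> K \<and> x * y \<in> K) \<and>
     (\<forall>x\<in>K. x \<noteq> 0 \<longrightarrow> inverse x \<in> K) \<and>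
     (\<exists>b. is_Q_basis K b)"

text \<open>The norm N_{K/Q}(a): determinant of the (rational) matrix of the
 Q-linear map x \<mapsto> a x with respect to a Q-basis of K.\<close>

definition field_norm :: "real set \<Rightarrow> real \<Rightarrow> real" where
  "field_norm K a =
     (let b = (SOME b. is_Q_basis K b) in
      det (SOME M::real^3^3. (\<forall>k l. M $ k $ l \<in> \<rat>) \<and> a *\<^sub>R b = M *v b))"

definition Delta_K :: "real set \<Rightarrow> (real \<times> real) set" where
  "Delta_K K = {(a, b). a \<in> K \<and> b \<in> K \<and>
     (\<forall>c0 c1 c2. c0 \<in> \<rat> \<longrightarrow> c1 \<in> \<rat> \<longrightarrow> c2 \<in> \<rat> \<longrightarrow>
        c0 + c1 * a + c2 * b = 0 \<longrightarrow> c0 = 0 \<and> c1 = 0 \<and> c2 = 0) \<and>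
     a > 0 \<and> b > 0 \<and> a + b < 1}"

definition Ind :: "(3 \<times> 3) set" where
  "Ind = {(i, j). i \<noteq> j}"

definition Delta :: "(real \<times> real) set" where
  "Delta = {(x, y). x \<ge> 0 \<and> y \<ge> 0 \<and> x + y \<le> 1}"

definition tri :: "3 \<times> 3 \<Rightarrow> (real \<times> real) set" where
  "tri e = Delta \<inter>
     (if e = (1,2) then {(x, y). x \<ge> y}
      else if e = (2,1) then {(x, y). x \<le> y}
      else if e = (0,1) then {(x, y). 2*x + y - 1 \<le> 0}
      else if e = (1,0) then {(x, y). 2*x + y - 1 \<ge> 0}
      else if e = (0,2) then {(x, y). x + 2*y - 1 \<le> 0}
      else if e = (2,0) then {(x, y). x + 2*y - 1 \<ge> 0}
      else {})"

definition Tmap :: "3 \<times> 3 \<Rightarrow> real \<times> real \<Rightarrow> real \<times> real" where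
  "Tmap e xy = (case xy of (x, y) \<Rightarrow>
     (if e = (1,2) then ((x - y) / (1 - y), y / (1 - y))
      else if e = (2,1) then (x / (1 - x), (y - x) / (1 - x))
      else if e = (0,1) then (x / (1 - x), y / (1 - x))
      else if e = (1,0) then ((2*x + y - 1) / (x + y), y / (x + y))
      else if e = (0,2) then (x / (1 - y), y / (1 - y))
      else ((x / (x + y), (x + 2*y - 1) / (x + y)))))"

text \<open>The selection \<open>\<epsilon>\<close>: the pair {i0,j0} maximising v_{i0 j0} (the maximum is
 unique on Delta_K), ordered according to the triangle containing the point.\<close>

definition epsilon :: "real set \<Rightarrow> real \<Rightarrow> real \<times> real \<Rightarrow> 3 \<times> 3" where
  "epsilon K r ab = (case ab of (a, b) \<Rightarrow>
     (let c = 1 - a - b;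
          v12 = a powr r * b powr r / \<bar>field_norm K a * field_norm K b\<bar>;
          v01 = a powr r * c powr r / \<bar>field_norm K a * field_norm K c\<bar>;
          v02 = b powr r * c powr r / \<bar>field_norm K b * field_norm K c\<bar>
      in if v12 > v01 \<and> v12 > v02 then (if (a, b) \<in> tri (1,2) then (1,2) else (2,1))
         else if v01 > v12 \<and> v01 > v02 then (if (a, b) \<in> tri (0,1) then (0,1) else (1,0))
         else (if (a, b) \<in> tri (0,2) then (0,2) else (2,0))))"

definition Tgauss :: "real set \<Rightarrow> real \<Rightarrow> real \<times> real \<Rightarrow> real \<times> real" where
  "Tgauss K r ab = Tmap (epsilon K r ab) ab"

definition nu :: "real \<times> real \<Rightarrow> real^3" where
  "nu ab = (case ab of (a, b) \<Rightarrow> (\<chi> k. if k = 0 then 1 - a - b else if k = 1 then a else b))"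

text \<open>A unit square (x, i*) is represented by the pair (x, i) with x an integer
 point of R^3 (represented in real^3) and i :: 3.\<close>

type_synonym square = "(real^3) \<times> 3"

definition int_vec :: "real^3 \<Rightarrow> bool" where
  "int_vec x \<longleftrightarrow> (\<forall>k. x $ k \<in> \<int>)"

definition ee :: "3 \<Rightarrow> real^3" where
  "ee i = axis i 1"

definition stepped :: "real^3 \<Rightarrow> square set" where
  "stepped a = {(x, i). int_vec x \<and> x \<bullet> a > 0 \<and> (x - ee i) \<bullet> a \<le> 0}"

definition stepped' :: "real^3 \<Rightarrow> square set" where
  "stepped' a = {(x, i). int_vec x \<and> x \<bullet> a \<ge> 0 \<and> (x - ee i) \<bullet> a < 0}"

definition Mmat :: "3 \<times> 3 \<Rightarrow> real^3^3" where
  "Mmat e = (\<chi> k l. if k = l \<or> (k, l) = e then 1 else 0)"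

definition Lmat :: "3 \<times> 3 \<Rightarrow> real^3^3" where
  "Lmat e = (case e of (i, j) \<Rightarrow> Mmat (j, i))"

definition Theta_sq :: "3 \<times> 3 \<Rightarrow> square \<Rightarrow> square set" where
  "Theta_sq e s = (case e of (i, j) \<Rightarrow> case s of (x, k) \<Rightarrow>
     (let Li = matrix_inv (Lmat (i, j)) in
      if k = j then {(Li *v (x + ee i), i), (Li *v x, j)}
      else {(Li *v x, k)}))"

text \<open>Patches are identified with their sets of unit squares; Theta is
 extended additively.\<close>

definition Theta :: "3 \<times> 3 \<Rightarrow> square set \<Rightarrow> square set" where
  "Theta e P = (\<Union>s\<in>P. Theta_sq e s)"

text \<open>Theta_comp eps n P = Theta_{eps 0} (... (Theta_{eps (n-1)} P)).\<close>

fun Theta_comp :: "(nat \<Rightarrow> 3 \<times> 3) \<Rightarrow> nat \<Rightarrow> square set \<Rightarrow> square set" where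
  "Theta_comp eps 0 P = P"
| "Theta_comp eps (Suc n) P = Theta_comp eps n (Theta (eps n) P)"

definition U :: "square set" where
  "U = {(ee i, i) | i. True}"

definition U' :: "square set" where
  "U' = {(0, i) | i. True}"

end

theory Submission
  imports Defs
begin

text \<open>Write \<open>\<nu>\<^sub>n = nu (ab n)\<close>. In homogeneous coordinates a step \<open>T\<close> of the algorithm with
\<open>\<epsilon>\<^sub>n = (i, j)\<close> subtracts the \<open>j\<close>-th coordinate from the \<open>i\<close>-th and renormalises, so
\<open>\<nu>\<^sub>n = c * Mmat (i, j) *v \<nu>\<^sub>n\<^sub>+\<^sub>1\<close> with \<open>c > 0\<close>; the new vector stays positive because
the coordinates are linearly independent over \<open>\<rat>\<close>. Since \<open>Lmat (i, j)\<close> is the transpose of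
\<open>Mmat (i, j)\<close>, the dual substitution multiplies every height \<open>x \<bullet> \<nu>\<^sub>n\<^sub>+\<^sub>1\<close> by \<open>c\<close> (the new
square \<open>i\<^sup>*\<close> only raises it), so it maps both stepped surfaces of \<open>\<nu>\<^sub>n\<^sub>+\<^sub>1\<close> into those of
\<open>\<nu>\<^sub>n\<close>. It adds to \<open>U\<close> and to \<open>U'\<close> the same square \<open>(e\<^sub>i - e\<^sub>j, i\<^sup>*)\<close>, which lies on
both surfaces. Hence \<open>\<gamma>\<^sub>n = X \<union> U\<close> and \<open>\<gamma>'\<^sub>n = X \<union> U'\<close> with \<open>X\<close> on both surfaces of \<open>\<nu>\<^sub>0\<close>,
whereas \<open>U\<close> lies only on the first and \<open>U'\<close> only on the second. Neither the arithmetic of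
\<open>K\<close> nor the rule choosing \<open>\<epsilon>\<^sub>n\<close> matters: only that \<open>(\<alpha>\<^sub>n, \<beta>\<^sub>n)\<close> lies in the
triangle of \<open>\<epsilon>\<^sub>n\<close>.\<close>

section \<open>Shear matrices\<close>

text \<open>The library enumerates the type \<open>3\<close> as \<open>1, 2, 3\<close>, where \<open>3 = 0\<close>.\<close>

lemma three_eq_0: "(3::3) = 0"
  by simp

lemma exhaust_3': "(k::3) = 0 \<or> k = 1 \<or> k = 2"
  using exhaust_3[of k] three_eq_0 by auto

lemma forall_3': "(\<forall>k::3. P k) \<longleftrightarrow> P 0 \<and> P 1 \<and> P 2"
  using forall_3[of P] by (simp add: three_eq_0 conj_commute conj_left_commute)

lemma sum_3': "sum f (UNIV::3 set) = f 0 + f 1 + f 2"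
  using sum_3[of f] by (simp add: three_eq_0 ac_simps)

lemma Ind_iff [simp]: "(i, j) \<in> Ind \<longleftrightarrow> i \<noteq> j"
  by (simp add: Ind_def)

lemma Ind_cases:
  assumes "e \<in> Ind"
  obtains "e = (1,2)" | "e = (2,1)" | "e = (0,1)" | "e = (1,0)" | "e = (0,2)" | "e = (2,0)"
proof -
  obtain i j where e: "e = (i, j)" and "i \<noteq> j" using assms by (cases e) simp
  then show ?thesis
    using exhaust_3'[of i] exhaust_3'[of j] that unfolding e by (elim disjE) simp_all
qed

lemma ee_nth: "ee m $ k = (if k = m then 1 else 0)"
  by (simp add: ee_def axis_def)

lemma inner_ee [simp]: "x \<bullet> ee k = x $ k" "ee k \<bullet> x = x $ k"
  by (simp_all add: ee_def inner_axis inner_axis')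

lemma ee_eq_iff: "ee m = ee k \<longleftrightarrow> m = k"
  by (simp add: ee_def axis_eq_axis)

lemma ee_neq_0: "ee k \<noteq> 0"
  by (simp add: ee_def)

lemma Mmat_mult:
  assumes "i \<noteq> j"
  shows "Mmat (i, j) *v x = x + x$j *\<^sub>R ee i"
proof -
  have "(\<Sum>l\<in>UNIV. (if k = l \<or> (k, l) = (i, j) then 1 else 0) * x$l)
      = (\<Sum>l\<in>UNIV. (if l = k then x$l else 0) + (if k = i \<and> l = j then x$l else 0))" for k
    using assms by (intro sum.cong) auto
  then show ?thesis
    by (simp add: vec_eq_iff matrix_vector_mult_def Mmat_def ee_nth sum.distrib)
qed

lemma Lmat_mult: "i \<noteq> j \<Longrightarrow> Lmat (i, j) *v x = x + x$i *\<^sub>R ee j"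
  by (simp add: Lmat_def Mmat_mult)

lemma matrix_inv_mult_eqI:
  fixes A :: "'a::field^'n^'n"
  assumes "inj ((*v) A)" and "A *v y = x"
  shows "matrix_inv A *v x = y"
proof -
  have "invertible A"
    using assms(1) by (simp add: invertible_left_inverse matrix_left_invertible_injective)
  then have "matrix_inv A ** A = mat 1"
    unfolding invertible_def matrix_inv_def by (rule someI2_ex) simp
  then show ?thesis
    using assms(2) by (metis matrix_vector_mul_assoc matrix_vector_mul_lid)
qed

lemma matrix_inv_Lmat_mult:
  assumes "i \<noteq> j"
  shows "matrix_inv (Lmat (i, j)) *v x = x - x$i *\<^sub>R ee j"
proof (rule matrix_inv_mult_eqI)
  show "inj ((*v) (Lmat (i, j)))"
  proof (rule injI)
    fix y z
    assume "Lmat (i, j) *v y = Lmat (i, j) *v z"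
    then have yz: "y + y$i *\<^sub>R ee j = z + z$i *\<^sub>R ee j"
      using assms by (simp add: Lmat_mult)
    have "y$i = z$i"
      using arg_cong[OF yz, of "\<lambda>v. v$i"] assms by (simp add: ee_nth)
    with yz show "y = z" by simp
  qed
  show "Lmat (i, j) *v (x - x$i *\<^sub>R ee j) = x"
    using assms by (simp add: Lmat_mult ee_nth)
qed

lemma inner_matrix_inv_Lmat_Mmat:
  assumes "i \<noteq> j"
  shows "(matrix_inv (Lmat (i, j)) *v y) \<bullet> (Mmat (i, j) *v a) = y \<bullet> a"
  using assms
  by (simp add: matrix_inv_Lmat_mult Mmat_mult ee_nth algebra_simps)

section \<open>Dual substitutions and stepped surfaces\<close>

lemma int_vec_add: "int_vec x \<Longrightarrow> int_vec y \<Longrightarrow> int_vec (x + y)"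
  and int_vec_diff: "int_vec x \<Longrightarrow> int_vec y \<Longrightarrow> int_vec (x - y)"
  and int_vec_ee: "int_vec (ee k)"
  by (auto simp: int_vec_def ee_nth)

lemma int_vec_matrix_inv_Lmat:
  "i \<noteq> j \<Longrightarrow> int_vec x \<Longrightarrow> int_vec (matrix_inv (Lmat (i, j)) *v x)"
  by (auto simp: matrix_inv_Lmat_mult int_vec_def ee_nth)

lemma Theta_sq_shear:
  assumes "i \<noteq> j"
  shows "Theta_sq (i, j) (x, k) =
    (if k = j then {(x + ee i - (x$i + 1) *\<^sub>R ee j, i), (x - x$i *\<^sub>R ee j, j)}
     else {(x - x$i *\<^sub>R ee j, k)})"
  using assms by (simp add: Theta_sq_def matrix_inv_Lmat_mult ee_nth algebra_simps)

lemma Theta_mono: "P \<subseteq> Q \<Longrightarrow> Theta e P \<subseteq> Theta e Q"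
  unfolding Theta_def by blast

lemma Theta_Un: "Theta e (P \<union> Q) = Theta e P \<union> Theta e Q"
  unfolding Theta_def by blast

lemma Theta_sq_heights:
  assumes ij: "i \<noteq> j" and a: "a = c *\<^sub>R (Mmat (i, j) *v a')"
    and "c > 0" and pos: "\<And>m. a'$m > 0"
    and s: "(y, m) \<in> Theta_sq (i, j) (x, k)" and "int_vec x"
  shows "int_vec y" and "c * (x \<bullet> a') \<le> y \<bullet> a"
    and "(y - ee m) \<bullet> a \<le> c * ((x - ee k) \<bullet> a')"
proof -
  have dual: "(matrix_inv (Lmat (i, j)) *v z) \<bullet> a = c * (z \<bullet> a')" for z
    using inner_matrix_inv_Lmat_Mmat[OF ij] by (simp add: a)
  have a_nth: "a$l = c * (a'$l + (if l = i then a'$j else 0))" for l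
    using ij by (simp add: a Mmat_mult ee_nth)
  let ?L = "matrix_inv (Lmat (i, j))"
  consider (new) "k = j" "y = ?L *v (x + ee i)" "m = i" | (kept) "y = ?L *v x" "m = k"
    using s by (auto simp: Theta_sq_def Let_def split: if_splits)
  then have "int_vec y \<and> c * (x \<bullet> a') \<le> y \<bullet> a \<and> (y - ee m) \<bullet> a \<le> c * ((x - ee k) \<bullet> a')"
  proof cases
    case new
    then show ?thesis
      using ij \<open>int_vec x\<close> \<open>c > 0\<close> pos[of i]
      by (simp add: int_vec_matrix_inv_Lmat int_vec_add int_vec_ee dual inner_diff_left
          inner_add_left a_nth algebra_simps)
  next
    case kept
    then show ?thesis
      using ij \<open>int_vec x\<close> \<open>c > 0\<close> pos[of k] pos[of j]
      by (simp add: int_vec_matrix_inv_Lmat dual inner_diff_left a_nth algebra_simps)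
  qed
  then show "int_vec y" "c * (x \<bullet> a') \<le> y \<bullet> a" "(y - ee m) \<bullet> a \<le> c * ((x - ee k) \<bullet> a')"
    by auto
qed

lemma Theta_stepped_subset:
  assumes "i \<noteq> j" and "a = c *\<^sub>R (Mmat (i, j) *v a')" and "c > 0" and "\<And>m. a'$m > 0"
  shows "Theta (i, j) (stepped a') \<subseteq> stepped a"
    and "Theta (i, j) (stepped' a') \<subseteq> stepped' a"
proof -
  note heights = Theta_sq_heights[OF assms]
  show "Theta (i, j) (stepped a') \<subseteq> stepped a"
  proof (clarsimp simp: Theta_def stepped_def)
    fix y m x k
    assume "(y, m) \<in> Theta_sq (i, j) (x, k)" "int_vec x" "0 < x \<bullet> a'" "(x - ee k) \<bullet> a' \<le> 0"
    moreover have "0 < c * (x \<bullet> a')" "c * ((x - ee k) \<bullet> a') \<le> 0"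
      using \<open>c > 0\<close> \<open>0 < x \<bullet> a'\<close> \<open>(x - ee k) \<bullet> a' \<le> 0\<close>
      by (simp_all add: mult_nonneg_nonpos)
    ultimately show "int_vec y \<and> 0 < y \<bullet> a \<and> (y - ee m) \<bullet> a \<le> 0"
      using heights[of y m x k] by fastforce
  qed
  show "Theta (i, j) (stepped' a') \<subseteq> stepped' a"
  proof (clarsimp simp: Theta_def stepped'_def)
    fix y m x k
    assume "(y, m) \<in> Theta_sq (i, j) (x, k)" "int_vec x" "0 \<le> x \<bullet> a'" "(x - ee k) \<bullet> a' < 0"
    moreover have "0 \<le> c * (x \<bullet> a')" "c * ((x - ee k) \<bullet> a') < 0"
      using \<open>c > 0\<close> \<open>0 \<le> x \<bullet> a'\<close> \<open>(x - ee k) \<bullet> a' < 0\<close>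
      by (simp_all add: mult_pos_neg)
    ultimately show "int_vec y \<and> 0 \<le> y \<bullet> a \<and> (y - ee m) \<bullet> a < 0"
      using heights[of y m x k] by fastforce
  qed
qed

lemma Theta_insert: "Theta e (insert s P) = Theta_sq e s \<union> Theta e P"
  by (simp add: Theta_def)

lemma Theta_U:
  assumes "i \<noteq> j"
  shows "Theta (i, j) U = insert (ee i - ee j, i) U"
proof -
  define R where "R = {(ee m, m) | m. m \<noteq> i \<and> m \<noteq> j}"
  have U: "U = insert (ee i, i) (insert (ee j, j) R)"
    by (auto simp: U_def R_def)
  have "Theta_sq (i, j) (ee m, m) = {(ee m, m)}" if "m \<noteq> i" "m \<noteq> j" for m
    using that assms by (simp add: Theta_sq_shear ee_nth)
  then have "Theta (i, j) R = R"
    unfolding Theta_def R_def by blast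
  moreover have "Theta_sq (i, j) (ee i, i) = {(ee i - ee j, i)}"
    "Theta_sq (i, j) (ee j, j) = {(ee i, i), (ee j, j)}"
    using assms by (simp_all add: Theta_sq_shear ee_nth)
  ultimately show ?thesis
    unfolding U Theta_insert by auto
qed

lemma Theta_U':
  assumes "i \<noteq> j"
  shows "Theta (i, j) U' = insert (ee i - ee j, i) U'"
proof -
  define R :: "square set" where "R = {(0, m) | m. m \<noteq> j}"
  have U': "U' = insert (0, j) R"
    by (auto simp: U'_def R_def)
  have "Theta_sq (i, j) (0, m) = {(0, m)}" if "m \<noteq> j" for m
    using that assms by (simp add: Theta_sq_shear)
  then have "Theta (i, j) R = R"
    unfolding Theta_def R_def by blast
  moreover have "Theta_sq (i, j) (0, j) = {(ee i - ee j, i), (0, j)}"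
    using assms by (simp add: Theta_sq_shear ee_nth)
  ultimately show ?thesis
    unfolding U' Theta_insert by auto
qed

lemma U_subset_Theta: "e \<in> Ind \<Longrightarrow> U \<subseteq> Theta e U"
  using Theta_U by (cases e) auto

section \<open>The invariant of the patches\<close>

lemma U_subset_stepped: "(\<And>k. a$k > 0) \<Longrightarrow> U \<subseteq> stepped a"
  by (auto simp: U_def stepped_def int_vec_ee)

lemma U_Int_stepped': "U \<inter> stepped' a = {}"
  by (auto simp: U_def stepped'_def)

lemma U'_Int_stepped: "U' \<inter> stepped a = {}"
  by (auto simp: U'_def stepped_def)

definition twin_patches :: "real^3 \<Rightarrow> square set \<Rightarrow> square set \<Rightarrow> bool" where
  "twin_patches a G G' \<longleftrightarrow> (\<exists>X. X \<subseteq> stepped a \<inter> stepped' a \<and> G = X \<union> U \<and> G' = X \<union> U')"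

lemma twin_patches_U: "twin_patches a U U'"
  unfolding twin_patches_def by blast

lemma twin_patches_Theta:
  assumes "i \<noteq> j" and a: "a = c *\<^sub>R (Mmat (i, j) *v a')" and "c > 0" and pos: "\<And>m. a'$m > 0"
    and "twin_patches a' G G'"
  shows "twin_patches a (Theta (i, j) G) (Theta (i, j) G')"
proof -
  obtain X where X: "X \<subseteq> stepped a' \<inter> stepped' a'" and G: "G = X \<union> U" "G' = X \<union> U'"
    using \<open>twin_patches a' G G'\<close> by (auto simp: twin_patches_def)
  let ?d = "(ee i - ee j, i)"
  have TX: "Theta (i, j) X \<subseteq> stepped a \<inter> stepped' a"
    using Theta_mono[of X] X Theta_stepped_subset[OF assms(1-4)] by blast
  have "a$i - a$j = c * a'$i" "a$j = c * a'$j"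
    using \<open>i \<noteq> j\<close> by (simp_all add: a Mmat_mult ee_nth algebra_simps)
  then have d: "?d \<in> stepped a \<inter> stepped' a"
    using mult_pos_pos[OF \<open>c > 0\<close> pos[of i]] mult_pos_pos[OF \<open>c > 0\<close> pos[of j]]
    by (simp add: stepped_def stepped'_def int_vec_diff int_vec_ee inner_diff_left)
  have "Theta (i, j) G = insert ?d (Theta (i, j) X) \<union> U"
    "Theta (i, j) G' = insert ?d (Theta (i, j) X) \<union> U'"
    using Theta_U[OF \<open>i \<noteq> j\<close>] Theta_U'[OF \<open>i \<noteq> j\<close>] by (auto simp: G Theta_Un)
  moreover have "insert ?d (Theta (i, j) X) \<subseteq> stepped a \<inter> stepped' a"
    using TX d by blast
  ultimately show ?thesis
    unfolding twin_patches_def by blast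
qed

lemma twin_patches_diff:
  assumes "twin_patches a G G'"
  shows "G - G' = U" and "G' - G = U'"
proof -
  obtain X where "X \<subseteq> stepped a \<inter> stepped' a" "G = X \<union> U" "G' = X \<union> U'"
    using assms by (auto simp: twin_patches_def)
  moreover have "U \<inter> U' = {}"
    by (auto simp: U_def U'_def ee_neq_0)
  ultimately show "G - G' = U" "G' - G = U'"
    using U_Int_stepped'[of a] U'_Int_stepped[of a] by blast+
qed

lemma twin_patches_subset_stepped:
  "twin_patches a G G' \<Longrightarrow> (\<And>k. a$k > 0) \<Longrightarrow> G \<subseteq> stepped a"
  using U_subset_stepped by (auto simp: twin_patches_def)

lemma Theta_comp_Suc_outer: "Theta_comp e (Suc n) P = Theta (e 0) (Theta_comp (\<lambda>k. e (Suc k)) n P)"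
  by (induction n arbitrary: P) auto

lemma Theta_comp_mono: "P \<subseteq> Q \<Longrightarrow> Theta_comp e n P \<subseteq> Theta_comp e n Q"
  by (induction n arbitrary: P Q) (auto simp: Theta_mono)

lemma twin_patches_Theta_comp:
  assumes "\<And>k. e k \<in> Ind" and "\<And>k m. a k $ m > 0"
    and "\<And>k. \<exists>c>0. a k = c *\<^sub>R (Mmat (e k) *v a (Suc k))"
  shows "twin_patches (a 0) (Theta_comp e n U) (Theta_comp e n U')"
  using assms
proof (induction n arbitrary: a e)
  case 0
  then show ?case by (simp add: twin_patches_U)
next
  case (Suc n)
  obtain i j where e0: "e 0 = (i, j)" and "i \<noteq> j"
    using Suc.prems(1)[of 0] by (cases "e 0") simp
  obtain c where "c > 0" "a 0 = c *\<^sub>R (Mmat (i, j) *v a 1)"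
    using Suc.prems(3)[of 0] e0 by auto
  moreover have "twin_patches (a 1) (Theta_comp (\<lambda>k. e (Suc k)) n U) (Theta_comp (\<lambda>k. e (Suc k)) n U')"
    using Suc.IH[of "\<lambda>k. e (Suc k)" "\<lambda>k. a (Suc k)"] Suc.prems by simp
  ultimately show ?case
    unfolding Theta_comp_Suc_outer e0 using twin_patches_Theta[OF \<open>i \<noteq> j\<close>] Suc.prems(2) by blast
qed

section \<open>The algorithm in homogeneous coordinates\<close>

definition rat_independent :: "real^3 \<Rightarrow> bool" where
  "rat_independent a \<longleftrightarrow> (\<forall>c. (\<forall>k. c$k \<in> \<rat>) \<longrightarrow> c \<bullet> a = 0 \<longrightarrow> c = 0)"

lemma rat_independent_nth_neq:
  assumes "rat_independent a" and "i \<noteq> j"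
  shows "a$i \<noteq> a$j"
proof
  assume "a$i = a$j"
  then have "(ee i - ee j) \<bullet> a = 0" by (simp add: inner_diff_left)
  moreover have "\<forall>k. (ee i - ee j)$k \<in> \<rat>" by (simp add: ee_nth)
  ultimately have "ee i - ee j = 0"
    using assms(1) unfolding rat_independent_def by blast
  then show False
    using assms(2) by (simp add: ee_eq_iff)
qed

lemma rat_independent_scaleR:
  assumes "rat_independent a" and "t \<noteq> 0"
  shows "rat_independent (t *\<^sub>R a)"
  using assms unfolding rat_independent_def by simp

lemma rat_independent_shear:
  assumes "rat_independent a" and "i \<noteq> j"
  shows "rat_independent (a - a$j *\<^sub>R ee i)"
  unfolding rat_independent_def
proof (intro allI impI)
  fix c :: "real^3"
  assume "\<forall>k. c$k \<in> \<rat>" "c \<bullet> (a - a$j *\<^sub>R ee i) = 0"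
  then have "\<forall>k. (c - c$i *\<^sub>R ee j)$k \<in> \<rat>" "(c - c$i *\<^sub>R ee j) \<bullet> a = 0"
    by (auto simp: ee_nth inner_diff_right inner_diff_left algebra_simps)
  then have "c - c$i *\<^sub>R ee j = 0"
    using assms(1) unfolding rat_independent_def by blast
  moreover have "(c - c$i *\<^sub>R ee j)$i = c$i"
    using assms(2) by (simp add: ee_nth)
  ultimately show "c = 0" by simp
qed

lemma Mmat_preimage:
  assumes "i \<noteq> j" and pos: "\<And>k. a$k > 0" and "rat_independent a" and "a$j \<le> a$i" and "c > 0"
  defines "b \<equiv> (1 / c) *\<^sub>R (a - a$j *\<^sub>R ee i)"
  shows "\<And>k. b$k > 0" and "rat_independent b" and "a = c *\<^sub>R (Mmat (i, j) *v b)"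
proof -
  have "a$j < a$i"
    using rat_independent_nth_neq[OF \<open>rat_independent a\<close> \<open>i \<noteq> j\<close>] \<open>a$j \<le> a$i\<close> by simp
  then show "b$k > 0" for k
    using pos[of k] \<open>c > 0\<close> by (simp add: b_def ee_nth)
  show "rat_independent b"
    unfolding b_def using \<open>c > 0\<close>
    by (simp add: rat_independent_scaleR rat_independent_shear assms(1,3))
  show "a = c *\<^sub>R (Mmat (i, j) *v b)"
    using \<open>i \<noteq> j\<close> \<open>c > 0\<close> by (simp add: b_def Mmat_mult ee_nth vec_eq_iff field_simps)
qed

lemma nu_pos_iff: "(\<forall>k. nu (x, y) $ k > 0) \<longleftrightarrow> x > 0 \<and> y > 0 \<and> x + y < 1"
  by (auto simp: forall_3' nu_def)

lemma inner_nu: "c \<bullet> nu (x, y) = c$0 + (c$1 - c$0) * x + (c$2 - c$0) * y"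
  by (simp add: inner_vec_def sum_3' nu_def algebra_simps)

lemma Delta_K_nu:
  assumes "(x, y) \<in> Delta_K K"
  shows "\<forall>k. nu (x, y) $ k > 0" and "rat_independent (nu (x, y))"
proof -
  have indep: "\<forall>c0 c1 c2. c0 \<in> \<rat> \<longrightarrow> c1 \<in> \<rat> \<longrightarrow> c2 \<in> \<rat> \<longrightarrow>
        c0 + c1 * x + c2 * y = 0 \<longrightarrow> c0 = 0 \<and> c1 = 0 \<and> c2 = 0"
    and "x > 0" "y > 0" "x + y < 1"
    using assms unfolding Delta_K_def mem_Collect_eq case_prod_conv by blast+
  then show "\<forall>k. nu (x, y) $ k > 0"
    by (simp add: nu_pos_iff)
  show "rat_independent (nu (x, y))"
    unfolding rat_independent_def
  proof (intro allI impI)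
    fix c :: "real^3"
    assume rat: "\<forall>k. c$k \<in> \<rat>" and "c \<bullet> nu (x, y) = 0"
    then have "c$0 + (c$1 - c$0) * x + (c$2 - c$0) * y = 0"
      by (simp only: inner_nu)
    moreover have "c$0 \<in> \<rat>" "c$1 - c$0 \<in> \<rat>" "c$2 - c$0 \<in> \<rat>"
      using rat by (simp_all add: Rats_diff)
    ultimately have "c$0 = 0 \<and> c$1 - c$0 = 0 \<and> c$2 - c$0 = 0"
      using indep by blast
    then show "c = 0"
      by (simp add: vec_eq_iff forall_3')
  qed
qed

lemma tri_swap:
  assumes "p \<in> Delta" and "(i, j) \<in> Ind"
  shows "p \<in> tri (i, j) \<or> p \<in> tri (j, i)"
  using assms(2)
  by (cases rule: Ind_cases) (use assms(1) in \<open>auto simp: tri_def\<close>)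

lemma epsilon_in_tri:
  assumes "p \<in> Delta"
  shows "epsilon K r p \<in> Ind" and "p \<in> tri (epsilon K r p)"
proof -
  let ?select = "\<lambda>i j. if p \<in> tri (i, j) then (i, j) else (j, i)"
  have select: "e \<in> Ind \<and> p \<in> tri e" if "e = ?select i j" and "i \<noteq> j" for e i j
    using that tri_swap[OF assms, of i j] by (cases "p \<in> tri (i, j)") simp_all
  have "epsilon K r p = ?select 1 2 \<or> epsilon K r p = ?select 0 1 \<or> epsilon K r p = ?select 0 2"
    unfolding epsilon_def Let_def by (simp split: prod.split)
  moreover have "(1::3) \<noteq> 2" "(0::3) \<noteq> 1" "(0::3) \<noteq> 2"
    by simp_all
  ultimately show "epsilon K r p \<in> Ind" and "p \<in> tri (epsilon K r p)"
    using select by blast+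
qed

lemma tri_nu_le:
  assumes "(i, j) \<in> Ind" and "p \<in> tri (i, j)"
  shows "nu p $ j \<le> nu p $ i"
  using assms(1)
  by (cases rule: Ind_cases) (use assms(2) in \<open>auto simp: tri_def nu_def\<close>)

lemma nu_Tmap:
  assumes "(i, j) \<in> Ind" and "nu p $ j < 1"
  shows "nu (Tmap (i, j) p) = (1 / (1 - nu p $ j)) *\<^sub>R (nu p - nu p $ j *\<^sub>R ee i)"
proof -
  obtain x y where p: "p = (x, y)" by (cases p)
  from assms(1) show ?thesis
    by (cases rule: Ind_cases)
      (use assms(2) in \<open>auto simp: p Tmap_def nu_def vec_eq_iff forall_3' ee_nth divide_simps\<close>)
qed

lemma nu_nth_less_1:
  assumes "\<And>k. nu p $ k > 0"
  shows "nu p $ j < 1"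
proof -
  obtain x y where p: "p = (x, y)" by (cases p)
  show ?thesis
    using assms[of 0] assms[of 1] assms[of 2] exhaust_3'[of j] by (auto simp: p nu_def)
qed

lemma Tgauss_step:
  assumes pos: "\<And>k. nu p $ k > 0" and indep: "rat_independent (nu p)"
  shows "epsilon K r p \<in> Ind" and "\<And>k. nu (Tgauss K r p) $ k > 0"
    and "rat_independent (nu (Tgauss K r p))"
    and "\<exists>c>0. nu p = c *\<^sub>R (Mmat (epsilon K r p) *v nu (Tgauss K r p))"
proof -
  have "p \<in> Delta"
    using pos nu_pos_iff[of "fst p" "snd p"] by (auto simp: Delta_def)
  then show e: "epsilon K r p \<in> Ind"
    by (rule epsilon_in_tri)
  obtain i j where ij: "epsilon K r p = (i, j)" by (cases "epsilon K r p")
  have "i \<noteq> j" and le: "nu p $ j \<le> nu p $ i"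
    using e epsilon_in_tri(2)[OF \<open>p \<in> Delta\<close>, of K r] tri_nu_le by (auto simp: ij)
  have less: "nu p $ j < 1"
    using nu_nth_less_1[OF pos] .
  then have T: "nu (Tgauss K r p) = (1 / (1 - nu p $ j)) *\<^sub>R (nu p - nu p $ j *\<^sub>R ee i)"
    using nu_Tmap[of i j p] \<open>i \<noteq> j\<close> by (simp add: Tgauss_def ij)
  note shear = Mmat_preimage[OF \<open>i \<noteq> j\<close> pos indep le, of "1 - nu p $ j"]
  show "nu (Tgauss K r p) $ k > 0" for k
    unfolding T using shear(1) less by simp
  show "rat_independent (nu (Tgauss K r p))"
    unfolding T using shear(2) less by simp
  show "\<exists>c>0. nu p = c *\<^sub>R (Mmat (epsilon K r p) *v nu (Tgauss K r p))"
    unfolding T ij using shear(3) less by (intro exI[where x = "1 - nu p $ j"]) simp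
qed

lemma Tgauss_orbit:
  assumes "(a0, b0) \<in> Delta_K K"
  shows "nu ((Tgauss K r ^^ n) (a0, b0)) $ k > 0"
    and "rat_independent (nu ((Tgauss K r ^^ n) (a0, b0)))"
proof -
  have "(\<forall>k. nu ((Tgauss K r ^^ n) (a0, b0)) $ k > 0) \<and> rat_independent (nu ((Tgauss K r ^^ n) (a0, b0)))"
  proof (induction n)
    case 0
    show ?case using Delta_K_nu[OF assms] by simp
  next
    case (Suc n)
    then show ?case using Tgauss_step(2,3)[of "(Tgauss K r ^^ n) (a0, b0)" K r] by simp
  qed
  then show "nu ((Tgauss K r ^^ n) (a0, b0)) $ k > 0"
    and "rat_independent (nu ((Tgauss K r ^^ n) (a0, b0)))"
    by blast+
qed

theorem corollary5p8:
  fixes K :: "real set" and p q :: nat and a0 b0 :: real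
    and r :: real and ab :: "nat \<Rightarrow> real \<times> real" and eps :: "nat \<Rightarrow> 3 \<times> 3"
    and gamma gamma' :: "nat \<Rightarrow> square set"
  assumes "real_cubic_field K"
    and "p > 0" and "q > 0" and "coprime p q" and "\<not> 3 dvd p"
    and "(a0, b0) \<in> Delta_K K"
  defines "r \<equiv> real p / real q"
    and "ab \<equiv> \<lambda>n. (Tgauss K r ^^ n) (a0, b0)"
    and "eps \<equiv> \<lambda>n. epsilon K r (ab n)"
    and "gamma \<equiv> \<lambda>n. Theta_comp eps n U"
    and "gamma' \<equiv> \<lambda>n. Theta_comp eps n U'"
  shows "(\<forall>n. gamma n - gamma' n = U \<and> gamma' n - gamma n = U')
       \<and> (\<forall>n. gamma n \<subseteq> gamma (Suc n))
       \<and> (\<Union>n. gamma n) \<subseteq> stepped (nu (a0, b0))"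
proof -
  have ab_Suc: "ab (Suc n) = Tgauss K r (ab n)" for n
    by (simp add: ab_def)
  have ab0: "ab 0 = (a0, b0)"
    by (simp add: ab_def)
  have pos: "nu (ab k) $ m > 0" and indep: "rat_independent (nu (ab k))" for k m
    using Tgauss_orbit[OF assms(6)] unfolding ab_def by blast+
  have eps_Ind: "eps k \<in> Ind"
    and eps_shear: "\<exists>c>0. nu (ab k) = c *\<^sub>R (Mmat (eps k) *v nu (ab (Suc k)))" for k
    using Tgauss_step(1,4)[OF pos[of k] indep[of k]] unfolding eps_def ab_Suc by blast+
  have twin: "twin_patches (nu (a0, b0)) (gamma n) (gamma' n)" for n
    using twin_patches_Theta_comp[of eps "\<lambda>k. nu (ab k)", OF eps_Ind pos eps_shear, of n]
    by (simp only: ab0 gamma_def gamma'_def)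
  have mono: "gamma n \<subseteq> gamma (Suc n)" for n
    unfolding gamma_def Theta_comp.simps using U_subset_Theta[OF eps_Ind] by (rule Theta_comp_mono)
  have "nu (a0, b0) $ m > 0" for m
    using pos[of 0] by (simp only: ab0)
  then have on_surface: "gamma n \<subseteq> stepped (nu (a0, b0))" for n
    by (rule twin_patches_subset_stepped[OF twin])
  show ?thesis
  proof (intro conjI allI UN_least)
    fix n
    show "gamma n - gamma' n = U" "gamma' n - gamma n = U'"
      using twin_patches_diff[OF twin] by blast+
    show "gamma n \<subseteq> gamma (Suc n)" by (rule mono)
    show "gamma n \<subseteq> stepped (nu (a0, b0))" by (rule on_surface)
  qed
qed

end
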